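(* Let $H$ be a set of $n$ objects with an associated decomposition scheme of combinatorial dimension $b$ that complies with the Clarkson–Shor framework. Assume its local growth function satisfies $u(m)\le 2^\alpha m^\beta$ for some real $\alpha$ and some $\beta\ge1$. Let $r>1$ and $\varphi\in(0,1)$. Let $R$ be a $\rho$-sample from $H$, where $$\rho\ \ge\ \max\Bigl(4r\bigl(b\ln 3+(\alpha-\beta)\ln 2+\ln\tfrac1\varphi\bigr),\ 8r\beta\ln(4r\beta)\Bigr).$$ Then, with probability at least $1-\varphi$, $\mathcal{CD}(R)$ is a $(1/r)$-cutting, i.e., every cell $\sigma\in\mathcal{CD}(R)$ satisfies $|K(\sigma)|\le n/r$.
   Context: Clarkson–Shor framework. $H$ is a finite set of objects embedded in some space $E$. Every subset $I\subseteq H$ determines a set $\mathcal{CD}(I)$ of cells. Combinatorial dimension: there is an integer $b>0$ such that for every $I\subseteq H$ and every $\sigma\in\mathcal{CD}(I)$ there is $J\subseteq I$ with $|J|\le b$ and $\sigma\in\mathcal{CD}(J)$. A smallest such $J$ is a defining set $D(\sigma)$ (any choice may be used). The least such $b$ is the combinatorial dimension. Conflict list: $f\in H$ conflicts with $\sigma$ if $\sigma\notin\mathcal{CD}(D(\sigma)\cup\{f\})$, and $K(\sigma)$ is the set of conflicting objects. Compliance means both axioms hold: (i) for every $R\subseteq H$ and every $\sigma\in\mathcal{CD}(R)$, some defining set $D(\sigma)\subseteq R$, and $K(\sigma)\cap R=\emptyset$; (ii) if $D(\sigma)\subseteq R$ for some defining set and $K(\sigma)\cap R=\emptyset$, then $\sigma\in\mathcal{CD}(R)$.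 Local growth function: $u(m)=\max_{I\subseteq H,|I|=m}|\mathcal{CD}(I)|$. A $\rho$-sample is the set of elements obtained by $\rho$ independent uniform draws from $H$, with repetition. *)

theory Defs
  imports "HOL-Analysis.Analysis" "HOL-Probability.Probability"
begin

definition has_dim_bound :: "'a set \<Rightarrow> ('a set \<Rightarrow> 'c set) \<Rightarrow> nat \<Rightarrow> bool" where
  "has_dim_bound H CD b \<longleftrightarrow>
     (\<forall>I \<subseteq> H. \<forall>\<sigma> \<in> CD I. \<exists>J \<subseteq> I. card J \<le> b \<and> \<sigma> \<in> CD J)"

definition comb_dim :: "'a set \<Rightarrow> ('a set \<Rightarrow> 'c set) \<Rightarrow> nat \<Rightarrow> bool" where
  "comb_dim H CD b \<longleftrightarrow> b > 0 \<and> has_dim_bound H CD b \<and>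
     (\<forall>b'. b' > 0 \<and> has_dim_bound H CD b' \<longrightarrow> b \<le> b')"

definition all_cells :: "'a set \<Rightarrow> ('a set \<Rightarrow> 'c set) \<Rightarrow> 'c set" where
  "all_cells H CD = (\<Union>I \<in> Pow H. CD I)"

definition is_defining_set :: "'a set \<Rightarrow> ('a set \<Rightarrow> 'c set) \<Rightarrow> 'c \<Rightarrow> 'a set \<Rightarrow> bool" where
  "is_defining_set H CD \<sigma> J \<longleftrightarrow> J \<subseteq> H \<and> \<sigma> \<in> CD J \<and>
     (\<forall>J'. J' \<subseteq> H \<and> \<sigma> \<in> CD J' \<longrightarrow> card J \<le> card J')"

definition defining_choice :: "'a set \<Rightarrow> ('a set \<Rightarrow> 'c set) \<Rightarrow> ('c \<Rightarrow> 'a set) \<Rightarrow> bool" where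
  "defining_choice H CD D \<longleftrightarrow> (\<forall>\<sigma> \<in> all_cells H CD. is_defining_set H CD \<sigma> (D \<sigma>))"

definition conflict_list :: "'a set \<Rightarrow> ('a set \<Rightarrow> 'c set) \<Rightarrow> ('c \<Rightarrow> 'a set) \<Rightarrow> 'c \<Rightarrow> 'a set" where
  "conflict_list H CD D \<sigma> = {f \<in> H. \<sigma> \<notin> CD (D \<sigma> \<union> {f})}"

definition complies :: "'a set \<Rightarrow> ('a set \<Rightarrow> 'c set) \<Rightarrow> ('c \<Rightarrow> 'a set) \<Rightarrow> bool" where
  "complies H CD D \<longleftrightarrow>
     (\<forall>R \<subseteq> H. \<forall>\<sigma> \<in> CD R.
        (\<exists>J. is_defining_set H CD \<sigma> J \<and> J \<subseteq> R) \<and> conflict_list H CD D \<sigma> \<inter> R = {}) \<and>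
     (\<forall>R \<subseteq> H. \<forall>\<sigma> \<in> all_cells H CD.
        (\<exists>J. is_defining_set H CD \<sigma> J \<and> J \<subseteq> R) \<and> conflict_list H CD D \<sigma> \<inter> R = {}
          \<longrightarrow> \<sigma> \<in> CD R)"

definition local_growth :: "'a set \<Rightarrow> ('a set \<Rightarrow> 'c set) \<Rightarrow> nat \<Rightarrow> nat" where
  "local_growth H CD m = Max ((\<lambda>I. card (CD I)) ` {I. I \<subseteq> H \<and> card I = m})"

text \<open>A \<rho>-sample: \<rho> independent uniform draws from H (with repetition);
  the outcome \<omega> :: nat => 'a gives the sample set \<omega> ` {..<\<rho>}.\<close>
definition draws :: "'a set \<Rightarrow> nat \<Rightarrow> (nat \<Rightarrow> 'a) pmf" where
  "draws H \<rho> = Pi_pmf {..<\<rho>} undefined (\<lambda>_. pmf_of_set H)"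

definition sample_set :: "nat \<Rightarrow> (nat \<Rightarrow> 'a) \<Rightarrow> 'a set" where
  "sample_set \<rho> \<omega> = \<omega> ` {..<\<rho>}"

end

theory Submission
  imports Defs
begin

text \<open>
  Call a cell heavy if its conflict list has more than \<open>n/r\<close> elements. Mark each of the
  \<open>\<rho>\<close> draws independently with probability \<open>1/3\<close>. If the sample has a heavy cell \<sigma>, the
  at most \<open>b\<close> draws realising its defining set are all marked with probability at least
  \<open>3\<^sup>-\<^sup>b\<close>, and then \<sigma> is still a cell of the marked subsample while no unmarked draw
  conflicts with it. Conversely, for a fixed marking the marked subsample has at most
  \<open>2\<^sup>\<alpha> \<rho>\<^sup>\<beta>\<close> cells, and each heavy one is missed by every unmarked draw with probability at
  most \<open>(1 - 1/r)\<close> per draw. Averaging over the markings gives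
  \<open>3\<^sup>-\<^sup>b P(heavy cell) \<le> 2\<^sup>\<alpha> \<rho>\<^sup>\<beta> (1/3 + 2/3 (1 - 1/r))\<^sup>\<rho> = 2\<^sup>\<alpha> \<rho>\<^sup>\<beta> (1 - 2/(3r))\<^sup>\<rho>\<close>,
  and the lower bound on \<open>\<rho>\<close> makes the right-hand side times \<open>3\<^sup>b\<close> at most \<open>\<phi>\<close>.
\<close>

lemma sum_Pow_power_card:
  fixes x y :: "'a :: comm_semiring_1"
  assumes "finite X"
  shows "(\<Sum>A\<in>Pow X. x ^ card A * y ^ card (X - A)) = (x + y) ^ card X"
  using prod_add[OF assms, of "\<lambda>_. x" "\<lambda>_. y"] by simp

lemma sum_supsets_power_card:
  fixes x y :: "'a :: comm_semiring_1"
  assumes "finite U" "T \<subseteq> U"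
  shows "(\<Sum>S | T \<subseteq> S \<and> S \<subseteq> U. x ^ card S * y ^ card (U - S))
         = x ^ card T * (x + y) ^ card (U - T)"
proof -
  have supsets: "{S. T \<subseteq> S \<and> S \<subseteq> U} = (\<union>) T ` Pow (U - T)"
    using assms(2) by (auto simp: image_def intro!: exI[of _ "S - T" for S])
  have "inj_on ((\<union>) T) (Pow (U - T))"
    by (auto simp: inj_on_def)
  then have "(\<Sum>S | T \<subseteq> S \<and> S \<subseteq> U. x ^ card S * y ^ card (U - S))
      = (\<Sum>A\<in>Pow (U - T). x ^ card (T \<union> A) * y ^ card (U - (T \<union> A)))"
    unfolding supsets by (simp add: sum.reindex)
  also have "\<dots> = (\<Sum>A\<in>Pow (U - T). x ^ card T * (x ^ card A * y ^ card ((U - T) - A)))"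
  proof (rule sum.cong)
    fix A assume "A \<in> Pow (U - T)"
    then have "card (T \<union> A) = card T + card A" "U - (T \<union> A) = (U - T) - A"
      using assms by (auto intro!: card_Un_disjoint dest: finite_subset)
    then show "x ^ card (T \<union> A) * y ^ card (U - (T \<union> A))
        = x ^ card T * (x ^ card A * y ^ card ((U - T) - A))"
      by (simp add: power_add mult.assoc)
  qed simp
  also have "\<dots> = x ^ card T * (x + y) ^ card (U - T)"
    using assms by (simp add: sum_Pow_power_card flip: sum_distrib_left)
  finally show ?thesis .
qed

lemma measure_bind_pmf_le:
  assumes "\<And>x. x \<in> set_pmf p \<Longrightarrow> measure_pmf.prob (f x) A \<le> c"
  shows "measure_pmf.prob (bind_pmf p f) A \<le> c"
proof -
  obtain x where "x \<in> set_pmf p" using set_pmf_not_empty[of p] by blast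
  then have "c \<ge> 0" using assms measure_nonneg order.trans by blast
  have "emeasure (bind_pmf p f) A = (\<integral>\<^sup>+x. emeasure (f x) A \<partial>p)"
    by simp
  also have "\<dots> \<le> (\<integral>\<^sup>+x. ennreal c \<partial>p)"
    by (intro nn_integral_mono_AE AE_pmfI)
       (simp add: measure_pmf.emeasure_eq_measure assms ennreal_leI)
  also have "\<dots> = ennreal c"
    by (simp add: measure_pmf.emeasure_space_1)
  finally show ?thesis
    using \<open>c \<ge> 0\<close> by (simp add: measure_pmf.emeasure_eq_measure)
qed

lemma prob_Pi_pmf_of_set_avoids_le:
  fixes K :: "'c \<Rightarrow> 'a set"
  assumes "finite T" "finite G" "finite H" "H \<noteq> {}" "q \<ge> 0"
    and light: "\<And>\<sigma>. \<sigma> \<in> G \<Longrightarrow> real (card (H - K \<sigma>)) \<le> q * real (card H)"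
  shows "measure_pmf.prob (Pi_pmf T d (\<lambda>_. pmf_of_set H)) {g. \<exists>\<sigma>\<in>G. \<forall>i\<in>T. g i \<notin> K \<sigma>}
         \<le> real (card G) * q ^ card T"
proof -
  let ?P = "Pi_pmf T d (\<lambda>_. pmf_of_set H)"
  have "measure_pmf.prob ?P {g. \<exists>\<sigma>\<in>G. \<forall>i\<in>T. g i \<notin> K \<sigma>}
      = measure_pmf.prob ?P (\<Union>\<sigma>\<in>G. Pi T (\<lambda>_. - K \<sigma>))"
    by (rule arg_cong[where f = "measure_pmf.prob ?P"]) auto
  also have "\<dots> \<le> (\<Sum>\<sigma>\<in>G. measure_pmf.prob ?P (Pi T (\<lambda>_. - K \<sigma>)))"
    by (rule measure_pmf.finite_measure_subadditive_finite) (use assms in auto)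
  also have "\<dots> \<le> (\<Sum>\<sigma>\<in>G. q ^ card T)"
  proof (rule sum_mono)
    fix \<sigma> assume "\<sigma> \<in> G"
    have "real (card (H - K \<sigma>)) / real (card H) \<le> q"
      using light[OF \<open>\<sigma> \<in> G\<close>] assms(3,4) by (simp add: divide_le_eq card_gt_0_iff)
    moreover have "measure_pmf.prob ?P (Pi T (\<lambda>_. - K \<sigma>))
        = (real (card (H - K \<sigma>)) / real (card H)) ^ card T"
      using assms(1,3,4) by (simp add: measure_Pi_pmf_Pi measure_pmf_of_set Diff_eq)
    ultimately show "measure_pmf.prob ?P (Pi T (\<lambda>_. - K \<sigma>)) \<le> q ^ card T"
      by (simp add: power_mono)
  qed
  finally show ?thesis by simp
qed

lemma prob_Pi_pmf_of_set_exists_avoiding_le: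
  fixes G :: "'a set \<Rightarrow> 'c set" and K :: "'c \<Rightarrow> 'a set"
  assumes "finite U" "S \<subseteq> U" "finite H" "H \<noteq> {}" "q \<ge> 0"
    and few: "\<And>R. R \<subseteq> H \<Longrightarrow> card R \<le> card S \<Longrightarrow> finite (G R) \<and> real (card (G R)) \<le> M"
    and light: "\<And>R \<sigma>. R \<subseteq> H \<Longrightarrow> \<sigma> \<in> G R \<Longrightarrow> real (card (H - K \<sigma>)) \<le> q * real (card H)"
  shows "measure_pmf.prob (Pi_pmf U d (\<lambda>_. pmf_of_set H))
           {\<omega>. \<exists>\<sigma>\<in>G (\<omega> ` S). \<forall>i\<in>U - S. \<omega> i \<notin> K \<sigma>}
         \<le> M * q ^ card (U - S)"
proof -
  let ?p = "\<lambda>_::'i. pmf_of_set H" and ?T = "U - S"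
  let ?glue = "\<lambda>f g i. if i \<in> S then f i else g i"
  have "finite S" using assms(1,2) finite_subset by blast
  have "Pi_pmf (S \<union> ?T) d ?p = map_pmf (\<lambda>(f, g). ?glue f g) (pair_pmf (Pi_pmf S d ?p) (Pi_pmf ?T d ?p))"
    using \<open>finite S\<close> assms(1) by (intro Pi_pmf_union) auto
  then have split: "Pi_pmf U d ?p = bind_pmf (Pi_pmf S d ?p) (\<lambda>f. map_pmf (?glue f) (Pi_pmf ?T d ?p))"
    using assms(2) by (simp add: Un_absorb1 pair_pmf_def map_pmf_def bind_assoc_pmf bind_return_pmf)
  show ?thesis
    unfolding split
  proof (rule measure_bind_pmf_le)
    fix f assume "f \<in> set_pmf (Pi_pmf S d ?p)"
    then have fS: "f ` S \<subseteq> H"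
      using set_Pi_pmf_subset'[OF \<open>finite S\<close>, of d ?p] assms(3,4) by (auto simp: PiE_dflt_def)
    moreover have "card (f ` S) \<le> card S"
      using \<open>finite S\<close> by (rule card_image_le)
    ultimately have G: "finite (G (f ` S))" "real (card (G (f ` S))) \<le> M"
      using few by auto
    have "?glue f g ` S = f ` S" for g by auto
    then have "?glue f -` {\<omega>. \<exists>\<sigma>\<in>G (\<omega> ` S). \<forall>i\<in>U - S. \<omega> i \<notin> K \<sigma>}
        = {g. \<exists>\<sigma>\<in>G (f ` S). \<forall>i\<in>?T. g i \<notin> K \<sigma>}"
      by auto
    then have "measure_pmf.prob (map_pmf (?glue f) (Pi_pmf ?T d ?p)) {\<omega>. \<exists>\<sigma>\<in>G (\<omega> ` S). \<forall>i\<in>U - S. \<omega> i \<notin> K \<sigma>}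
        = measure_pmf.prob (Pi_pmf ?T d ?p) {g. \<exists>\<sigma>\<in>G (f ` S). \<forall>i\<in>?T. g i \<notin> K \<sigma>}"
      by simp
    also have "\<dots> \<le> real (card (G (f ` S))) * q ^ card ?T"
      using assms(1,3,4,5) G(1) light[OF fS] by (intro prob_Pi_pmf_of_set_avoids_le) auto
    also have "\<dots> \<le> M * q ^ card ?T"
      using G(2) assms(5) by (simp add: mult_right_mono)
    finally show "measure_pmf.prob (map_pmf (?glue f) (Pi_pmf ?T d ?p))
        {\<omega>. \<exists>\<sigma>\<in>G (\<omega> ` S). \<forall>i\<in>U - S. \<omega> i \<notin> K \<sigma>} \<le> M * q ^ card ?T" .
  qed
qed

lemma prob_le_thinning_sum:
  fixes P :: "'b pmf" and E :: "'i set \<Rightarrow> 'b set" and x :: real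
  assumes "finite U" "0 \<le> x" "x \<le> 1"
    and cover: "\<And>\<omega>. \<omega> \<in> set_pmf P \<Longrightarrow> \<omega> \<in> A \<Longrightarrow>
                  \<exists>T\<subseteq>U. card T \<le> k \<and> (\<forall>S. T \<subseteq> S \<and> S \<subseteq> U \<longrightarrow> \<omega> \<in> E S)"
  shows "x ^ k * measure_pmf.prob P A
         \<le> (\<Sum>S\<in>Pow U. x ^ card S * (1 - x) ^ card (U - S) * measure_pmf.prob P (E S))"
proof -
  \<comment> \<open>\<open>w S\<close> is the probability that keeping each index of \<open>U\<close> independently with probability \<open>x\<close>
    leaves exactly \<open>S\<close>; the supersets of \<open>T\<close> have total weight \<open>x ^ card T\<close>.\<close>
  define w where "w S = x ^ card S * (1 - x) ^ card (U - S)" for S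
  have w_nonneg: "w S \<ge> 0" for S
    using assms(2,3) by (simp add: w_def)
  have integrable: "integrable (measure_pmf P) (indicator B :: 'b \<Rightarrow> real)" for B
    by (simp add: measure_pmf.emeasure_eq_measure)
  have pointwise: "x ^ k * indicator A \<omega> \<le> (\<Sum>S\<in>Pow U. w S * indicator (E S) \<omega>)"
    if \<omega>: "\<omega> \<in> set_pmf P" for \<omega>
  proof (cases "\<omega> \<in> A")
    case False
    have "0 \<le> (\<Sum>S\<in>Pow U. w S * indicator (E S) \<omega>)"
      by (intro sum_nonneg mult_nonneg_nonneg w_nonneg) simp
    then show ?thesis
      using False by simp
  next
    case True
    obtain T where T: "T \<subseteq> U" "card T \<le> k" "\<forall>S. T \<subseteq> S \<and> S \<subseteq> U \<longrightarrow> \<omega> \<in> E S"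
      using cover[OF \<omega> True] by blast
    have "x ^ k \<le> x ^ card T"
      using T(2) assms(2,3) by (rule power_decreasing)
    also have "\<dots> = (\<Sum>S | T \<subseteq> S \<and> S \<subseteq> U. w S)"
      using sum_supsets_power_card[OF assms(1) T(1), of x "1 - x"] by (simp add: w_def)
    also have "\<dots> = (\<Sum>S | T \<subseteq> S \<and> S \<subseteq> U. w S * indicator (E S) \<omega>)"
      by (rule sum.cong) (auto simp: T(3))
    also have "\<dots> \<le> (\<Sum>S\<in>Pow U. w S * indicator (E S) \<omega>)"
      using assms(1) by (intro sum_mono2) (auto simp: w_nonneg)
    finally show ?thesis
      using True by simp
  qed
  have "x ^ k * measure_pmf.prob P A = (\<integral>\<omega>. x ^ k * indicator A \<omega> \<partial>P)"
    by simp
  also have "\<dots> \<le> (\<integral>\<omega>. (\<Sum>S\<in>Pow U. w S * indicator (E S) \<omega>) \<partial>P)"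
    by (intro integral_mono_AE AE_pmfI pointwise Bochner_Integration.integrable_sum
        integrable_mult_right integrable)
  also have "\<dots> = (\<Sum>S\<in>Pow U. w S * measure_pmf.prob P (E S))"
    by (subst Bochner_Integration.integral_sum) (auto intro: integrable_mult_right integrable)
  finally show ?thesis
    by (simp add: w_def)
qed

lemma prob_le_thinning_bound:
  fixes P :: "'b pmf" and E :: "'i set \<Rightarrow> 'b set" and x :: real
  assumes "finite U" "0 \<le> x" "x \<le> 1"
    and cover: "\<And>\<omega>. \<omega> \<in> set_pmf P \<Longrightarrow> \<omega> \<in> A \<Longrightarrow>
                  \<exists>T\<subseteq>U. card T \<le> k \<and> (\<forall>S. T \<subseteq> S \<and> S \<subseteq> U \<longrightarrow> \<omega> \<in> E S)"
    and rare: "\<And>S. S \<subseteq> U \<Longrightarrow> measure_pmf.prob P (E S) \<le> M * q ^ card (U - S)"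
  shows "x ^ k * measure_pmf.prob P A \<le> M * (x + (1 - x) * q) ^ card U"
proof -
  have "x ^ k * measure_pmf.prob P A
      \<le> (\<Sum>S\<in>Pow U. x ^ card S * (1 - x) ^ card (U - S) * measure_pmf.prob P (E S))"
    using assms(1-3) cover by (rule prob_le_thinning_sum)
  also have "\<dots> \<le> (\<Sum>S\<in>Pow U. x ^ card S * (1 - x) ^ card (U - S) * (M * q ^ card (U - S)))"
    using assms(2,3) rare by (intro sum_mono mult_left_mono) auto
  also have "\<dots> = M * (\<Sum>S\<in>Pow U. x ^ card S * ((1 - x) * q) ^ card (U - S))"
    by (simp add: sum_distrib_left power_mult_distrib mult_ac)
  also have "\<dots> = M * (x + (1 - x) * q) ^ card U"
    using assms(1) by (simp add: sum_Pow_power_card)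
  finally show ?thesis .
qed

lemma ln_le_13_12_plus_div_8:
  fixes t :: real
  assumes "t > 0"
  shows "ln t \<le> 13/12 + t / 8"
proof -
  have "ln t = 3 * ln 2 + ln (t / 8)"
    using assms ln_realpow[of 2 3] by (simp add: ln_div)
  also have "ln (t / 8) \<le> t / 8 - 1"
    using assms by (intro ln_le_minus_one) simp
  finally show ?thesis
    using ln2_le_25_over_36 by linarith
qed

lemma mult_ln_le_of_ge_mult_ln:
  fixes c \<rho> :: real
  assumes c: "c > 1" and \<rho>: "\<rho> \<ge> 8 * c * ln (4 * c)"
  shows "12 * c * ln (2 * \<rho>) \<le> 5 * \<rho>"
proof -
  define t where "t = \<rho> / c"
  have \<rho>_eq: "\<rho> = c * t"
    using c by (simp add: t_def)
  have ln_4c: "ln (4 * c) = ln 2 + ln (2 * c)"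
    using c ln_mult[of 2 "2 * c"] by simp
  have "ln (2 * c) \<ge> ln 2" "ln (2::real) \<ge> 2/3"
    using c ln2_ge_two_thirds by auto
  moreover have t: "t \<ge> 8 * ln (4 * c)"
    using \<rho> c by (simp add: t_def field_simps)
  ultimately have "t > 0" "ln (2 * c) \<le> t / 8" "t \<ge> 32/3"
    using ln_4c by linarith+
  moreover have "ln (2 * \<rho>) = ln (2 * c) + ln t"
    unfolding \<rho>_eq using c \<open>t > 0\<close> by (simp add: ln_mult)
  ultimately have "12 * ln (2 * \<rho>) \<le> 5 * t"
    using ln_le_13_12_plus_div_8[of t] by linarith
  then show ?thesis
    unfolding \<rho>_eq using c by (simp add: algebra_simps)
qed

lemma thinned_growth_bound_le:
  fixes b \<rho> :: nat and \<alpha> \<beta> r \<phi> :: real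
  assumes \<beta>: "\<beta> \<ge> 1" and r: "r > 1" and \<phi>: "0 < \<phi>"
    and \<rho>: "real \<rho> \<ge> max (4 * r * (real b * ln 3 + (\<alpha> - \<beta>) * ln 2 + ln (1 / \<phi>)))
                             (8 * r * \<beta> * ln (4 * r * \<beta>))"
  shows "3 ^ b * (2 powr \<alpha> * real \<rho> powr \<beta>) * (1 - 2 / (3 * r)) ^ \<rho> \<le> \<phi>"
proof -
  have "r * \<beta> > 1"
    using \<beta> r by (smt (verit) mult_le_cancel_left1)
  moreover have \<rho>2: "real \<rho> \<ge> 8 * (r * \<beta>) * ln (4 * (r * \<beta>))"
    using \<rho> by (simp add: mult.assoc)
  ultimately have "real \<rho> > 0"
    by (smt (verit) ln_gt_zero mult_pos_pos)
  have "12 * (r * \<beta>) * ln (2 * real \<rho>) \<le> 5 * real \<rho>"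
    using \<open>r * \<beta> > 1\<close> \<rho>2 by (rule mult_ln_le_of_ge_mult_ln)
  then have "\<beta> * ln 2 + \<beta> * ln (real \<rho>) \<le> 5 * real \<rho> / (12 * r)"
    using r \<open>real \<rho> > 0\<close> by (simp add: field_simps ln_mult)
  moreover have "real b * ln 3 + (\<alpha> - \<beta>) * ln 2 - ln \<phi> \<le> real \<rho> / (4 * r)"
    using \<rho> \<phi> r by (simp add: ln_div field_simps)
  moreover have "real \<rho> / (4 * r) + 5 * real \<rho> / (12 * r) = 2 * real \<rho> / (3 * r)"
    using r by (simp add: field_simps)
  ultimately have exponent: "real b * ln 3 + \<alpha> * ln 2 + \<beta> * ln (real \<rho>) - 2 * real \<rho> / (3 * r) \<le> ln \<phi>"
    by (simp add: algebra_simps)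
  have "(1 - 2 / (3 * r)) ^ \<rho> \<le> exp (- 2 / (3 * r)) ^ \<rho>"
    using r exp_ge_add_one_self[of "- 2 / (3 * r)"] by (intro power_mono) (simp_all add: field_simps)
  then have "3 ^ b * (2 powr \<alpha> * real \<rho> powr \<beta>) * (1 - 2 / (3 * r)) ^ \<rho>
      \<le> 3 ^ b * (2 powr \<alpha> * real \<rho> powr \<beta>) * exp (- 2 / (3 * r)) ^ \<rho>"
    by (simp add: mult_left_mono)
  also have "\<dots> = exp (real b * ln 3) * exp (\<alpha> * ln 2) * exp (\<beta> * ln (real \<rho>)) * exp (- (2 * real \<rho> / (3 * r)))"
  proof -
    have "(3::real) ^ b = exp (real b * ln 3)"
      by (simp add: exp_of_nat_mult)
    then show ?thesis
      using \<open>real \<rho> > 0\<close> by (simp add: powr_def mult.commute flip: exp_of_nat_mult)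
  qed
  also have "\<dots> = exp (real b * ln 3 + \<alpha> * ln 2 + \<beta> * ln (real \<rho>) - 2 * real \<rho> / (3 * r))"
    by (simp add: exp_add exp_diff exp_minus field_simps)
  also have "\<dots> \<le> \<phi>"
    using exponent \<phi> by (metis exp_le_cancel_iff exp_ln)
  finally show ?thesis .
qed

lemma card_CD_le_local_growth:
  assumes "finite H" "I \<subseteq> H"
  shows "card (CD I) \<le> local_growth H CD (card I)"
proof -
  have "finite ((\<lambda>I. card (CD I)) ` {J. J \<subseteq> H \<and> card J = card I})"
    using assms(1) by simp
  then show ?thesis
    unfolding local_growth_def using assms(2) by (intro Max_ge) auto
qed

lemma sample_set_draws_subset:
  assumes "finite H" "H \<noteq> {}" "\<omega> \<in> set_pmf (draws H \<rho>)"
  shows "sample_set \<rho> \<omega> \<subseteq> H"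
  using assms set_Pi_pmf_subset'[of "{..<\<rho>}" undefined "\<lambda>_. pmf_of_set H"]
  by (auto simp: draws_def sample_set_def PiE_dflt_def)

lemma complies_cell_persists:
  assumes comp: "complies H CD D" and dim: "has_dim_bound H CD b"
    and R: "R \<subseteq> H" "\<sigma> \<in> CD R"
  obtains J where "J \<subseteq> R" "card J \<le> b" "conflict_list H CD D \<sigma> \<inter> R = {}"
    "\<And>S. J \<subseteq> S \<Longrightarrow> S \<subseteq> R \<Longrightarrow> \<sigma> \<in> CD S"
proof -
  have cell_defined: "(\<exists>J. is_defining_set H CD \<sigma> J \<and> J \<subseteq> R) \<and> conflict_list H CD D \<sigma> \<inter> R = {}"
    using comp R unfolding complies_def by blast
  have cell_exists: "\<sigma> \<in> CD S"
    if "S \<subseteq> H" "is_defining_set H CD \<sigma> J" "J \<subseteq> S" "conflict_list H CD D \<sigma> \<inter> S = {}" for S J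
  proof -
    have "\<sigma> \<in> all_cells H CD"
      using R by (auto simp: all_cells_def)
    with comp that show ?thesis
      unfolding complies_def by blast
  qed
  from cell_defined obtain J where J: "is_defining_set H CD \<sigma> J" "J \<subseteq> R"
    and no_conflict: "conflict_list H CD D \<sigma> \<inter> R = {}"
    by blast
  obtain J' where J': "J' \<subseteq> R" "card J' \<le> b" "\<sigma> \<in> CD J'"
    using dim R unfolding has_dim_bound_def by blast
  have "card J \<le> card J'"
    using J(1) J'(1,3) R(1) unfolding is_defining_set_def by blast
  show ?thesis
  proof
    show "J \<subseteq> R" "conflict_list H CD D \<sigma> \<inter> R = {}"
      by (fact J(2) no_conflict)+
    show "card J \<le> b"
      using \<open>card J \<le> card J'\<close> J'(2) by linarith
    show "\<sigma> \<in> CD S" if "J \<subseteq> S" "S \<subseteq> R" for S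
      using cell_exists[OF _ J(1)] that no_conflict R(1) by blast
  qed
qed

lemma sample_cell_persists:
  assumes "complies H CD D" "has_dim_bound H CD b"
    and "\<omega> ` U \<subseteq> H" "\<sigma> \<in> CD (\<omega> ` U)"
  obtains T where "T \<subseteq> U" "card T \<le> b"
    "\<And>S. T \<subseteq> S \<Longrightarrow> S \<subseteq> U \<Longrightarrow> \<sigma> \<in> CD (\<omega> ` S) \<and> (\<forall>i\<in>U - S. \<omega> i \<notin> conflict_list H CD D \<sigma>)"
proof -
  obtain J where J: "J \<subseteq> \<omega> ` U" "card J \<le> b" "conflict_list H CD D \<sigma> \<inter> \<omega> ` U = {}"
    and persists: "\<And>S. J \<subseteq> S \<Longrightarrow> S \<subseteq> \<omega> ` U \<Longrightarrow> \<sigma> \<in> CD S"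
    using complies_cell_persists[OF assms] by blast
  obtain T where T: "T \<subseteq> U" "inj_on \<omega> T" "J = \<omega> ` T"
    using J(1) subset_image_inj by metis
  show ?thesis
  proof
    show "T \<subseteq> U" "card T \<le> b"
      using T J(2) by (auto simp: card_image)
    show "\<sigma> \<in> CD (\<omega> ` S) \<and> (\<forall>i\<in>U - S. \<omega> i \<notin> conflict_list H CD D \<sigma>)"
      if "T \<subseteq> S" "S \<subseteq> U" for S
      using persists[of "\<omega> ` S"] that T(3) J(3) by auto
  qed
qed

lemma prob_heavy_cell_avoids_rest_le:
  fixes H :: "'a set" and CD :: "'a set \<Rightarrow> 'c set" and D :: "'c \<Rightarrow> 'a set"
  assumes H: "finite H" "H \<noteq> {}" and finCD: "\<forall>I \<subseteq> H. finite (CD I)"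
    and growth: "\<forall>m \<le> card H. real (local_growth H CD m) \<le> 2 powr \<alpha> * real m powr \<beta>"
    and "\<beta> \<ge> 0" "r \<ge> 1" "S \<subseteq> {..<\<rho>}"
  shows "measure_pmf.prob (draws H \<rho>)
           {\<omega>. \<exists>\<sigma>\<in>{\<sigma> \<in> CD (\<omega> ` S). real (card H) / r < real (card (conflict_list H CD D \<sigma>))}.
                 \<forall>i\<in>{..<\<rho>} - S. \<omega> i \<notin> conflict_list H CD D \<sigma>}
         \<le> 2 powr \<alpha> * real \<rho> powr \<beta> * (1 - 1 / r) ^ card ({..<\<rho>} - S)"
  unfolding draws_def
proof (rule prob_Pi_pmf_of_set_exists_avoiding_le)
  fix R assume R: "R \<subseteq> H" "card R \<le> card S"
  let ?heavy = "{\<sigma> \<in> CD R. real (card H) / r < real (card (conflict_list H CD D \<sigma>))}"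
  have "finite (CD R)"
    using finCD R(1) by blast
  then have "card ?heavy \<le> card (CD R)"
    by (intro card_mono) auto
  also have "\<dots> \<le> local_growth H CD (card R)"
    using H(1) R(1) by (rule card_CD_le_local_growth)
  finally have "real (card ?heavy) \<le> 2 powr \<alpha> * real (card R) powr \<beta>"
    using growth card_mono[OF H(1) R(1)] by (meson of_nat_le_iff order.trans)
  also have "\<dots> \<le> 2 powr \<alpha> * real \<rho> powr \<beta>"
  proof -
    have "card S \<le> \<rho>"
      using card_mono[OF _ \<open>S \<subseteq> {..<\<rho>}\<close>] by simp
    then show ?thesis
      using R(2) \<open>\<beta> \<ge> 0\<close> by (intro mult_left_mono powr_mono2) auto
  qed
  finally show "finite ?heavy \<and> real (card ?heavy) \<le> 2 powr \<alpha> * real \<rho> powr \<beta>"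
    using \<open>finite (CD R)\<close> by simp
next
  fix R \<sigma> assume "\<sigma> \<in> {\<sigma> \<in> CD R. real (card H) / r < real (card (conflict_list H CD D \<sigma>))}"
  then have heavy: "real (card H) / r < real (card (conflict_list H CD D \<sigma>))"
    by simp
  have "conflict_list H CD D \<sigma> \<subseteq> H"
    by (auto simp: conflict_list_def)
  then have "real (card (H - conflict_list H CD D \<sigma>)) = real (card H) - real (card (conflict_list H CD D \<sigma>))"
    using H(1) by (simp add: card_Diff_subset finite_subset card_mono of_nat_diff)
  also have "\<dots> \<le> (1 - 1 / r) * real (card H)"
    using heavy by (simp add: algebra_simps)
  finally show "real (card (H - conflict_list H CD D \<sigma>)) \<le> (1 - 1 / r) * real (card H)" .
qed (use H \<open>S \<subseteq> {..<\<rho>}\<close> \<open>r \<ge> 1\<close> in auto)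

lemma prob_sample_has_heavy_cell_le:
  fixes H :: "'a set" and CD :: "'a set \<Rightarrow> 'c set" and D :: "'c \<Rightarrow> 'a set"
  assumes H: "finite H" "H \<noteq> {}" and finCD: "\<forall>I \<subseteq> H. finite (CD I)"
    and dim: "has_dim_bound H CD b" and comp: "complies H CD D"
    and growth: "\<forall>m \<le> card H. real (local_growth H CD m) \<le> 2 powr \<alpha> * real m powr \<beta>"
    and "\<beta> \<ge> 0" "r \<ge> 1"
  shows "measure_pmf.prob (draws H \<rho>)
           {\<omega>. \<exists>\<sigma>\<in>CD (sample_set \<rho> \<omega>). real (card H) / r < real (card (conflict_list H CD D \<sigma>))}
         \<le> 3 ^ b * (2 powr \<alpha> * real \<rho> powr \<beta>) * (1 - 2 / (3 * r)) ^ \<rho>"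
proof -
  let ?heavy = "\<lambda>\<sigma>. real (card H) / r < real (card (conflict_list H CD D \<sigma>))"
  define E where "E S = {\<omega>. \<exists>\<sigma>\<in>{\<sigma> \<in> CD (\<omega> ` S). ?heavy \<sigma>}.
                            \<forall>i\<in>{..<\<rho>} - S. \<omega> i \<notin> conflict_list H CD D \<sigma>}" for S
  have "(1/3) ^ b * measure_pmf.prob (draws H \<rho>) {\<omega>. \<exists>\<sigma>\<in>CD (sample_set \<rho> \<omega>). ?heavy \<sigma>}
      \<le> 2 powr \<alpha> * real \<rho> powr \<beta> * (1/3 + (1 - 1/3) * (1 - 1/r)) ^ card {..<\<rho>}"
  proof (rule prob_le_thinning_bound)
    fix \<omega> assume "\<omega> \<in> set_pmf (draws H \<rho>)" "\<omega> \<in> {\<omega>. \<exists>\<sigma>\<in>CD (sample_set \<rho> \<omega>). ?heavy \<sigma>}"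
    then obtain \<sigma> where "\<omega> ` {..<\<rho>} \<subseteq> H" "\<sigma> \<in> CD (\<omega> ` {..<\<rho>})" "?heavy \<sigma>"
      using sample_set_draws_subset[OF H] by (auto simp: sample_set_def)
    moreover obtain T where T: "T \<subseteq> {..<\<rho>}" "card T \<le> b" "\<And>S. T \<subseteq> S \<Longrightarrow> S \<subseteq> {..<\<rho>} \<Longrightarrow>
        \<sigma> \<in> CD (\<omega> ` S) \<and> (\<forall>i\<in>{..<\<rho>} - S. \<omega> i \<notin> conflict_list H CD D \<sigma>)"
      using sample_cell_persists[OF comp dim calculation(1,2)] by blast
    ultimately have "\<omega> \<in> E S" if "T \<subseteq> S" "S \<subseteq> {..<\<rho>}" for S
      using T(3)[OF that] unfolding E_def by blast
    then show "\<exists>T\<subseteq>{..<\<rho>}. card T \<le> b \<and> (\<forall>S. T \<subseteq> S \<and> S \<subseteq> {..<\<rho>} \<longrightarrow> \<omega> \<in> E S)"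
      using T(1,2) by blast
  next
    fix S assume "S \<subseteq> {..<\<rho>}"
    then show "measure_pmf.prob (draws H \<rho>) (E S)
        \<le> 2 powr \<alpha> * real \<rho> powr \<beta> * (1 - 1 / r) ^ card ({..<\<rho>} - S)"
      unfolding E_def using assms by (intro prob_heavy_cell_avoids_rest_le) auto
  qed auto
  moreover have "1/3 + (1 - 1/3) * (1 - 1/r) = 1 - 2 / (3 * r)"
    by (simp add: field_simps)
  ultimately show ?thesis
    by (simp add: power_one_over pos_divide_le_eq mult_ac)
qed

theorem mainTheorem3:
  fixes H :: "'a set" and CD :: "'a set \<Rightarrow> 'c set" and D :: "'c \<Rightarrow> 'a set"
    and n b \<rho> :: nat and \<alpha> \<beta> r \<phi> :: real
  assumes finH: "finite H" and neH: "H \<noteq> {}" and n_def: "card H = n"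
    and finCD: "\<forall>I \<subseteq> H. finite (CD I)"
    and dim: "comb_dim H CD b"
    and Dchoice: "defining_choice H CD D"
    and comp: "complies H CD D"
    and growth: "\<forall>m \<le> n. real (local_growth H CD m) \<le> 2 powr \<alpha> * real m powr \<beta>"
    and beta: "\<beta> \<ge> 1"
    and r: "r > 1"
    and phi: "0 < \<phi>" "\<phi> < 1"
    and rho: "real \<rho> \<ge> max (4 * r * (real b * ln 3 + (\<alpha> - \<beta>) * ln 2 + ln (1 / \<phi>)))
                             (8 * r * \<beta> * ln (4 * r * \<beta>))"
  shows "measure_pmf.prob (draws H \<rho>)
           {\<omega>. \<forall>\<sigma> \<in> CD (sample_set \<rho> \<omega>). real (card (conflict_list H CD D \<sigma>)) \<le> real n / r}
         \<ge> 1 - \<phi>"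
proof -
  have "measure_pmf.prob (draws H \<rho>)
          {\<omega>. \<exists>\<sigma>\<in>CD (sample_set \<rho> \<omega>). real n / r < real (card (conflict_list H CD D \<sigma>))}
        \<le> 3 ^ b * (2 powr \<alpha> * real \<rho> powr \<beta>) * (1 - 2 / (3 * r)) ^ \<rho>"
    using finH neH finCD dim comp growth beta r unfolding n_def[symmetric] comb_dim_def
    by (intro prob_sample_has_heavy_cell_le) auto
  also have "\<dots> \<le> \<phi>"
    using beta r phi(1) rho by (rule thinned_growth_bound_le)
  finally show ?thesis
    using measure_pmf.prob_compl[of "{\<omega>. \<exists>\<sigma>\<in>CD (sample_set \<rho> \<omega>). real n / r < real (card (conflict_list H CD D \<sigma>))}" "draws H \<rho>"]
    by (simp add: not_less Compl_eq_Diff_UNIV[symmetric] Collect_neg_eq[symmetric])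
qed

end
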